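(* Let $d\ge1$, $k\ge1$, and let $H$ be a balanced hypergraph of discrete $d$-intervals on the ground set $[k]=\{1,\dots,k\}$. Then $H$ contains a matching $M$ with $\sum_{m\in M}|m|\ge \frac{k}{2d}$.
   Context: A discrete $d$-interval on $[k]$ (with its natural linear order) is a union of at most $d$ pairwise disjoint nonempty sets of consecutive integers in $[k]$. A hypergraph of discrete $d$-intervals on $[k]$ is a finite family of such sets, regarded as a hypergraph on vertex set $[k]$. $H$ is balanced if there is $f:H\to\mathbb{R}_{\ge0}$ with $\sum_{h\ni v}f(h)=1$ for every $v\in[k]$. A matching is a set of pairwise disjoint edges. *)

theory Defs
  imports Complex_Main "HOL-Library.Disjoint_Sets"
begin

definition discrete_interval :: "nat \<Rightarrow> nat set \<Rightarrow> bool" where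
  "discrete_interval k J \<longleftrightarrow> (\<exists>a b. 1 \<le> a \<and> a \<le> b \<and> b \<le> k \<and> J = {a..b})"

definition discrete_d_interval :: "nat \<Rightarrow> nat \<Rightarrow> nat set \<Rightarrow> bool" where
  "discrete_d_interval d k S \<longleftrightarrow>
     (\<exists>I. finite I \<and> card I \<le> d \<and> (\<forall>J\<in>I. discrete_interval k J)
          \<and> pairwise disjnt I \<and> S = \<Union>I)"

definition d_interval_hypergraph :: "nat \<Rightarrow> nat \<Rightarrow> nat set set \<Rightarrow> bool" where
  "d_interval_hypergraph d k H \<longleftrightarrow> finite H \<and> (\<forall>h\<in>H. discrete_d_interval d k h)"

definition balanced :: "nat \<Rightarrow> nat set set \<Rightarrow> bool" where
  "balanced k H \<longleftrightarrow> (\<exists>f :: nat set \<Rightarrow> real. (\<forall>h\<in>H. f h \<ge> 0) \<and>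
       (\<forall>v\<in>{1..k}. (\<Sum>h\<in>{h\<in>H. v \<in> h}. f h) = 1))"

definition matching_in :: "nat set set \<Rightarrow> nat set set \<Rightarrow> bool" where
  "matching_in H M \<longleftrightarrow> M \<subseteq> H \<and> pairwise disjnt M"

end

theory Submission
  imports Defs
begin

text \<open>
  Local ratio argument. Call \<open>p\<close> a right end of \<open>s\<close> if \<open>p \<in> s\<close> and \<open>p + 1 \<notin> s\<close>; a
  \<open>d\<close>-interval has at most \<open>d\<close> right ends. If two finite sets meet, one contains a right end of
  the other, so for a fractional matching \<open>x\<close> the \<open>x\<close>-weight of the edges meeting \<open>h\<close>,
  averaged with weights \<open>x h\<close>, is at most \<open>2d\<close>. Subtracting \<open>w h\<close> from the weight of every edge
  meeting such a light edge \<open>h\<close> lowers \<open>\<Sum> x\<cdot>w\<close> by at most \<open>2d\<cdot>w h\<close> and makes the weight of \<open>h\<close>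
  zero; by induction some matching \<open>M\<close> satisfies \<open>\<Sum> x\<cdot>w \<le> 2d \<Sum>\<^sub>M w\<close>. For a balanced
  hypergraph on \<open>[k]\<close> and \<open>w = card\<close> the left side equals \<open>k\<close>.
\<close>

definition right_ends :: "nat set \<Rightarrow> nat set" where
  "right_ends s = {p\<in>s. Suc p \<notin> s}"

definition fractional_matching :: "'a set set \<Rightarrow> ('a set \<Rightarrow> real) \<Rightarrow> bool" where
  "fractional_matching E x \<longleftrightarrow> (\<forall>g\<in>E. 0 \<le> x g) \<and> (\<forall>p. (\<Sum>g\<in>{g\<in>E. p \<in> g}. x g) \<le> 1)"

lemma fractional_matching_subset:
  assumes "fractional_matching E x" "E' \<subseteq> E" "finite E"
  shows "fractional_matching E' x"
  unfolding fractional_matching_def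
proof (intro conjI allI ballI)
  fix p
  have "(\<Sum>g\<in>{g\<in>E'. p \<in> g}. x g) \<le> (\<Sum>g\<in>{g\<in>E. p \<in> g}. x g)"
    using assms unfolding fractional_matching_def by (intro sum_mono2) auto
  then show "(\<Sum>g\<in>{g\<in>E'. p \<in> g}. x g) \<le> 1"
    using assms(1) unfolding fractional_matching_def by (meson order_trans)
qed (use assms in \<open>auto simp: fractional_matching_def\<close>)

lemma meeting_sets_share_right_end:
  assumes "finite g" "g \<inter> h \<noteq> {}"
  shows "right_ends h \<inter> g \<noteq> {} \<or> right_ends g \<inter> h \<noteq> {}"
proof -
  obtain p where p: "p \<in> g \<inter> h" using assms by blast
  define S where "S = {q. p \<le> q \<and> {p..q} \<subseteq> g \<inter> h}"
  have "finite S"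
    using assms(1) unfolding S_def by (rule rev_finite_subset) auto
  moreover have "p \<in> S" using p unfolding S_def by auto
  ultimately have "Max S \<in> S" and "Suc (Max S) \<notin> S"
    using Max_in Max_ge Suc_n_not_le_n by blast+
  then have "Max S \<in> g \<inter> h" and "Suc (Max S) \<notin> g \<inter> h"
    unfolding S_def by (auto simp: atLeastAtMostSuc_conv)
  then show ?thesis unfolding right_ends_def by blast
qed

lemma discrete_d_interval_subset:
  assumes "discrete_d_interval d k h"
  shows "h \<subseteq> {1..k}"
  using assms unfolding discrete_d_interval_def discrete_interval_def by fastforce

lemma card_right_ends_discrete_d_interval:
  assumes "discrete_d_interval d k h"
  shows "card (right_ends h) \<le> d"
proof -
  obtain I where I: "finite I" "card I \<le> d" "\<forall>J\<in>I. discrete_interval k J" "h = \<Union>I"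
    using assms unfolding discrete_d_interval_def by blast
  have "right_ends h \<subseteq> Max ` I"
  proof
    fix p assume "p \<in> right_ends h"
    then have p: "p \<in> h" "Suc p \<notin> h" unfolding right_ends_def by auto
    then obtain J where J: "J \<in> I" "p \<in> J" using I by auto
    then obtain a b where ab: "J = {a..b}" "a \<le> b"
      using I unfolding discrete_interval_def by blast
    have "p = b"
    proof (rule ccontr)
      assume "p \<noteq> b"
      then have "Suc p \<in> J" using J(2) ab by auto
      then show False using p(2) J(1) I(4) by blast
    qed
    moreover have "Max J = b" using ab by (intro Max_eqI) auto
    ultimately show "p \<in> Max ` I" using J(1) by auto
  qed
  then have "card (right_ends h) \<le> card (Max ` I)" using I(1) by (intro card_mono) auto
  also have "\<dots> \<le> card I" using I(1) by (rule card_image_le)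
  finally have "card (right_ends h) \<le> card I" .
  with I(2) show ?thesis by simp
qed

lemma sum_Un_le_nonneg:
  fixes f :: "'a \<Rightarrow> real"
  assumes "finite A" "finite B" "\<forall>x\<in>A \<union> B. 0 \<le> f x"
  shows "sum f (A \<union> B) \<le> sum f A + sum f B"
proof -
  have "0 \<le> sum f (A \<inter> B)" using assms(3) by (intro sum_nonneg) auto
  then show ?thesis using sum_Un[OF assms(1,2), of f] by simp
qed

lemma fractional_matching_sum_meeting_le_card:
  assumes "fractional_matching E x" "finite E" "finite P"
  shows "(\<Sum>g\<in>{g\<in>E. P \<inter> g \<noteq> {}}. x g) \<le> real (card P)"
  using assms(3)
proof (induction P rule: finite_induct)
  case (insert a P)
  have "{g\<in>E. insert a P \<inter> g \<noteq> {}} = {g\<in>E. a \<in> g} \<union> {g\<in>E. P \<inter> g \<noteq> {}}" by auto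
  then have "(\<Sum>g\<in>{g\<in>E. insert a P \<inter> g \<noteq> {}}. x g)
      \<le> (\<Sum>g\<in>{g\<in>E. a \<in> g}. x g) + (\<Sum>g\<in>{g\<in>E. P \<inter> g \<noteq> {}}. x g)"
    using assms(1,2) unfolding fractional_matching_def by (auto intro!: sum_Un_le_nonneg)
  also have "\<dots> \<le> 1 + real (card P)"
    using assms(1) insert.IH unfolding fractional_matching_def by (intro add_mono) auto
  finally show ?case using insert by simp
qed simp

lemma sum_mult_sum_related_commute:
  fixes x :: "'a \<Rightarrow> 'b::comm_semiring_1"
  assumes "finite E"
  shows "(\<Sum>h\<in>E. x h * (\<Sum>g\<in>{g\<in>E. R g h}. x g)) = (\<Sum>g\<in>E. x g * (\<Sum>h\<in>{h\<in>E. R g h}. x h))"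
proof -
  have "(\<Sum>h\<in>E. x h * (\<Sum>g\<in>{g\<in>E. R g h}. x g))
      = (\<Sum>h\<in>E. \<Sum>g\<in>E. if R g h then x g * x h else 0)"
    using assms by (simp add: sum.inter_filter sum_distrib_left if_distrib mult.commute cong: if_cong)
  also have "\<dots> = (\<Sum>g\<in>E. \<Sum>h\<in>E. if R g h then x g * x h else 0)"
    by (rule sum.swap)
  also have "\<dots> = (\<Sum>g\<in>E. x g * (\<Sum>h\<in>{h\<in>E. R g h}. x h))"
    using assms by (simp add: sum.inter_filter sum_distrib_left if_distrib cong: if_cong)
  finally show ?thesis .
qed

lemma fractional_matching_overlap_average:
  assumes "fractional_matching E x" "finite E"
    and edges: "\<And>g. g \<in> E \<Longrightarrow> finite g \<and> card (right_ends g) \<le> d"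
  shows "(\<Sum>h\<in>E. x h * (\<Sum>g\<in>{g\<in>E. g \<inter> h \<noteq> {}}. x g)) \<le> 2 * real d * (\<Sum>h\<in>E. x h)"
proof -
  have x_nonneg: "\<forall>g\<in>E. 0 \<le> x g" using assms(1) unfolding fractional_matching_def by blast
  define A where "A h = (\<Sum>g\<in>{g\<in>E. right_ends h \<inter> g \<noteq> {}}. x g)" for h
  define B where "B h = (\<Sum>g\<in>{g\<in>E. right_ends g \<inter> h \<noteq> {}}. x g)" for h
  have A_le: "A h \<le> real d" if "h \<in> E" for h
  proof -
    have "finite (right_ends h)" using edges[OF that] unfolding right_ends_def by simp
    then have "A h \<le> real (card (right_ends h))"
      unfolding A_def using assms by (intro fractional_matching_sum_meeting_le_card)
    then show ?thesis using edges[OF that] by linarith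
  qed
  have overlap_le: "(\<Sum>g\<in>{g\<in>E. g \<inter> h \<noteq> {}}. x g) \<le> A h + B h" if "h \<in> E" for h
  proof -
    have "{g\<in>E. g \<inter> h \<noteq> {}} \<subseteq> {g\<in>E. right_ends h \<inter> g \<noteq> {}} \<union> {g\<in>E. right_ends g \<inter> h \<noteq> {}}"
      using edges meeting_sets_share_right_end by blast
    then have "(\<Sum>g\<in>{g\<in>E. g \<inter> h \<noteq> {}}. x g)
        \<le> (\<Sum>g\<in>{g\<in>E. right_ends h \<inter> g \<noteq> {}} \<union> {g\<in>E. right_ends g \<inter> h \<noteq> {}}. x g)"
      using assms(2) x_nonneg by (intro sum_mono2) auto
    also have "\<dots> \<le> A h + B h"
      unfolding A_def B_def using assms(2) x_nonneg by (intro sum_Un_le_nonneg) auto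
    finally show ?thesis .
  qed
  have "(\<Sum>h\<in>E. x h * (\<Sum>g\<in>{g\<in>E. g \<inter> h \<noteq> {}}. x g)) \<le> (\<Sum>h\<in>E. x h * A h + x h * B h)"
    using overlap_le x_nonneg by (intro sum_mono) (simp add: mult_left_mono flip: distrib_left)
  also have "\<dots> = (\<Sum>h\<in>E. x h * A h) + (\<Sum>h\<in>E. x h * B h)" by (rule sum.distrib)
  also have "(\<Sum>h\<in>E. x h * B h) = (\<Sum>h\<in>E. x h * A h)"
    unfolding A_def B_def using assms(2) by (rule sum_mult_sum_related_commute)
  also have "(\<Sum>h\<in>E. x h * A h) \<le> (\<Sum>h\<in>E. x h * real d)"
    using A_le x_nonneg by (intro sum_mono mult_left_mono) auto
  finally show ?thesis by (simp add: sum_distrib_left sum_distrib_right mult_ac)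
qed

lemma exists_le_weighted_average:
  fixes x N :: "'a \<Rightarrow> real"
  assumes "finite E" "E \<noteq> {}" "\<forall>h\<in>E. 0 < x h"
    and "(\<Sum>h\<in>E. x h * N h) \<le> c * (\<Sum>h\<in>E. x h)"
  shows "\<exists>h\<in>E. N h \<le> c"
proof (rule ccontr)
  assume "\<not> ?thesis"
  then have "(\<Sum>h\<in>E. x h * c) < (\<Sum>h\<in>E. x h * N h)"
    using assms(1-3) by (intro sum_strict_mono) auto
  with assms(4) show False by (simp add: sum_distrib_left mult.commute)
qed

lemma fractional_matching_light_edge:
  assumes "fractional_matching E x" "finite E" "E \<noteq> {}" "\<forall>g\<in>E. 0 < x g"
    and "\<And>g. g \<in> E \<Longrightarrow> finite g \<and> card (right_ends g) \<le> d"
  shows "\<exists>h\<in>E. (\<Sum>g\<in>{g\<in>E. g \<inter> h \<noteq> {}}. x g) \<le> 2 * real d"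
  using assms(2-4) fractional_matching_overlap_average[OF assms(1,2,5)]
  by (rule exists_le_weighted_average)

lemma sum_le_sum_positive_part:
  fixes x w :: "'a \<Rightarrow> real"
  assumes "finite E" "\<forall>h\<in>E. 0 \<le> x h"
  shows "(\<Sum>h\<in>E. x h * w h) \<le> (\<Sum>h\<in>{h\<in>E. 0 < x h \<and> 0 < w h}. x h * w h)"
proof -
  have "(\<Sum>h\<in>E. x h * w h) \<le> (\<Sum>h\<in>E. if 0 < x h \<and> 0 < w h then x h * w h else 0)"
    using assms(2) by (intro sum_mono) (auto simp: mult_nonneg_nonpos)
  then show ?thesis using assms(1) by (simp add: sum.inter_filter)
qed

lemma sum_lowered_weights:
  fixes x w :: "'a set \<Rightarrow> real"
  assumes "finite E" "h \<in> E" "h \<noteq> {}"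
  defines "w' \<equiv> \<lambda>g. w g - (if g \<inter> h \<noteq> {} then w h else 0)"
  shows "(\<Sum>g\<in>E. x g * w g) = (\<Sum>g\<in>E - {h}. x g * w' g) + w h * (\<Sum>g\<in>{g\<in>E. g \<inter> h \<noteq> {}}. x g)"
proof -
  have "(\<Sum>g\<in>E. x g * w g) = (\<Sum>g\<in>E. x g * w' g + (if g \<inter> h \<noteq> {} then w h * x g else 0))"
    unfolding w'_def by (intro sum.cong) (auto simp: algebra_simps)
  also have "\<dots> = (\<Sum>g\<in>E. x g * w' g) + (\<Sum>g\<in>E. if g \<inter> h \<noteq> {} then w h * x g else 0)"
    by (rule sum.distrib)
  also have "(\<Sum>g\<in>E. x g * w' g) = (\<Sum>g\<in>E - {h}. x g * w' g)"
    using assms by (intro sum.mono_neutral_right) (auto simp: w'_def)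
  also have "(\<Sum>g\<in>E. if g \<inter> h \<noteq> {} then w h * x g else 0) = w h * (\<Sum>g\<in>{g\<in>E. g \<inter> h \<noteq> {}}. x g)"
    using assms(1) by (simp add: sum.inter_filter sum_distrib_left if_distrib cong: if_cong)
  finally show ?thesis .
qed

lemma matching_lowered_weights_extend:
  fixes w :: "'a set \<Rightarrow> real"
  assumes "finite M" "pairwise disjnt M" "h \<notin> M" "0 \<le> w h"
  shows "\<exists>M'\<subseteq>insert h M. pairwise disjnt M' \<and>
           (\<Sum>m\<in>M. w m - (if m \<inter> h \<noteq> {} then w h else 0)) + w h \<le> sum w M'"
proof (cases "\<exists>g\<in>M. g \<inter> h \<noteq> {}")
  case True
  then obtain g where g: "g \<in> M" "g \<inter> h \<noteq> {}" by blast
  have "w h \<le> (\<Sum>m\<in>M. if m \<inter> h \<noteq> {} then w h else 0)"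
    using member_le_sum[of g M "\<lambda>m. if m \<inter> h \<noteq> {} then w h else 0"] g assms(1,4) by auto
  then show ?thesis using assms(2) by (intro exI[of _ M]) (auto simp: sum_subtractf)
next
  case False
  then have "pairwise disjnt (insert h M)"
    using assms(2) by (auto simp: pairwise_insert disjnt_def)
  then show ?thesis using False assms(1,3) by (intro exI[of _ "insert h M"]) auto
qed

lemma local_ratio_step:
  fixes x w :: "'a set \<Rightarrow> real"
  assumes "finite E" "h \<in> E" "h \<noteq> {}" "0 \<le> w h" "0 \<le> c"
    and light: "(\<Sum>g\<in>{g\<in>E. g \<inter> h \<noteq> {}}. x g) \<le> c"
    and M: "M \<subseteq> E - {h}" "pairwise disjnt M"
  defines "w' \<equiv> \<lambda>g. w g - (if g \<inter> h \<noteq> {} then w h else 0)"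
  assumes IH: "(\<Sum>g\<in>E - {h}. x g * w' g) \<le> c * sum w' M"
  shows "\<exists>M'\<subseteq>E. pairwise disjnt M' \<and> (\<Sum>g\<in>E. x g * w g) \<le> c * sum w M'"
proof -
  have "(\<Sum>g\<in>E. x g * w g) = (\<Sum>g\<in>E - {h}. x g * w' g) + w h * (\<Sum>g\<in>{g\<in>E. g \<inter> h \<noteq> {}}. x g)"
    using sum_lowered_weights[OF assms(1-3)] unfolding w'_def .
  also have "\<dots> \<le> c * (sum w' M + w h)"
    using IH mult_left_mono[OF light assms(4)] by (simp add: algebra_simps)
  finally have bound: "(\<Sum>g\<in>E. x g * w g) \<le> c * (sum w' M + w h)" .
  have "finite M" "h \<notin> M" using M assms(1) finite_subset by auto
  then obtain M' where M': "M' \<subseteq> insert h M" "pairwise disjnt M'" "sum w' M + w h \<le> sum w M'"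
    using matching_lowered_weights_extend[of M h w] M(2) assms(4) unfolding w'_def by auto
  have "c * (sum w' M + w h) \<le> c * sum w M'" using M'(3) assms(5) by (rule mult_left_mono)
  moreover have "M' \<subseteq> E" using M'(1) M assms(2) by auto
  ultimately show ?thesis using bound M'(2) by (intro exI[of _ M']) auto
qed

lemma local_ratio_matching:
  fixes x w :: "nat set \<Rightarrow> real"
  assumes "finite E" "fractional_matching E x"
    and "\<And>g. g \<in> E \<Longrightarrow> g \<noteq> {} \<and> finite g \<and> card (right_ends g) \<le> d"
  shows "\<exists>M\<subseteq>E. pairwise disjnt M \<and> (\<Sum>h\<in>E. x h * w h) \<le> 2 * real d * sum w M"
  using assms
proof (induction "card E" arbitrary: E w rule: less_induct)
  case less
  \<comment> \<open>Discarding edges with \<open>x h = 0\<close> or \<open>w h \<le> 0\<close> can only raise the left side; afterwards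
      the averaging is strict and the chosen edge has \<open>w h \<ge> 0\<close>.\<close>
  define E' where "E' = {h\<in>E. 0 < x h \<and> 0 < w h}"
  have E'_sub: "E' \<subseteq> E" and fin: "finite E'" using less.prems(1) unfolding E'_def by auto
  have frac': "fractional_matching E' x"
    using fractional_matching_subset[OF less.prems(2) E'_sub less.prems(1)] .
  have total_le: "(\<Sum>h\<in>E. x h * w h) \<le> (\<Sum>h\<in>E'. x h * w h)"
    unfolding E'_def using less.prems(1,2)
    by (intro sum_le_sum_positive_part) (auto simp: fractional_matching_def)
  show ?case
  proof (cases "E' = {}")
    case True
    then show ?thesis using total_le by (intro exI[of _ "{}"]) auto
  next
    case False
    have "\<forall>g\<in>E'. 0 < x g" unfolding E'_def by simp
    then obtain h where h: "h \<in> E'" and light: "(\<Sum>g\<in>{g\<in>E'. g \<inter> h \<noteq> {}}. x g) \<le> 2 * real d"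
      using fractional_matching_light_edge[OF frac' fin False] less.prems(3) E'_sub by blast
    have h_ne: "h \<noteq> {}" and wh: "0 \<le> w h" using h E'_sub less.prems(3) unfolding E'_def by auto
    define w' where "w' g = w g - (if g \<inter> h \<noteq> {} then w h else 0)" for g
    have "card (E' - {h}) < card E'" using fin h by (rule card_Diff1_less)
    also have "\<dots> \<le> card E" using less.prems(1) E'_sub by (rule card_mono)
    finally have smaller: "card (E' - {h}) < card E" .
    have "fractional_matching (E' - {h}) x"
      using fractional_matching_subset[OF frac' _ fin] by blast
    then obtain M where M: "M \<subseteq> E' - {h}" "pairwise disjnt M"
      and IH: "(\<Sum>g\<in>E' - {h}. x g * w' g) \<le> 2 * real d * sum w' M"
      using less.hyps[OF smaller, of w'] less.prems(3) fin E'_sub by blast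
    have "\<exists>M'\<subseteq>E'. pairwise disjnt M' \<and> (\<Sum>g\<in>E'. x g * w g) \<le> 2 * real d * sum w M'"
      using IH unfolding w'_def by (intro local_ratio_step[where w = w, OF fin h h_ne wh _ light M]) auto
    then show ?thesis using total_le E'_sub by (meson order_trans subset_trans)
  qed
qed

lemma balanced_total_weight:
  fixes f :: "nat set \<Rightarrow> real"
  assumes "finite H" "\<forall>h\<in>H. h \<subseteq> {1..k}"
    and "\<forall>v\<in>{1..k}. (\<Sum>h\<in>{h\<in>H. v \<in> h}. f h) = 1"
  shows "(\<Sum>h\<in>H. f h * real (card h)) = real k"
proof -
  have "(\<Sum>h\<in>H. f h * real (card h)) = (\<Sum>h\<in>H. \<Sum>v\<in>{1..k}. if v \<in> h then f h else 0)"
  proof (rule sum.cong)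
    fix h assume "h \<in> H"
    then have "{v\<in>{1..k}. v \<in> h} = h" using assms(2) by blast
    then have "real (card h) = (\<Sum>v\<in>{1..k}. if v \<in> h then 1 else 0)"
      by (simp add: sum.inter_filter[symmetric])
    then show "f h * real (card h) = (\<Sum>v\<in>{1..k}. if v \<in> h then f h else 0)"
      by (simp add: sum_distrib_left if_distrib cong: if_cong)
  qed simp
  also have "\<dots> = (\<Sum>v\<in>{1..k}. \<Sum>h\<in>{h\<in>H. v \<in> h}. f h)"
    using assms(1) by (subst sum.swap) (simp add: sum.inter_filter)
  also have "\<dots> = real k" using assms(3) by simp
  finally show ?thesis .
qed

lemma balanced_fractional_matching:
  assumes "\<forall>h\<in>H. h \<subseteq> {1..k}" "\<forall>h\<in>H. 0 \<le> f h"
    and "\<forall>v\<in>{1..k}. (\<Sum>h\<in>{h\<in>H. v \<in> h}. f h) = 1"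
  shows "fractional_matching H f"
  unfolding fractional_matching_def
proof (intro conjI allI)
  fix p
  show "(\<Sum>h\<in>{h\<in>H. p \<in> h}. f h) \<le> 1"
  proof (cases "p \<in> {1..k}")
    case False
    then have "{h\<in>H. p \<in> h} = {}" using assms(1) by blast
    then show ?thesis unfolding \<open>{h\<in>H. p \<in> h} = {}\<close> by simp
  qed (use assms(3) in simp)
qed (use assms(2) in blast)

lemma balanced_d_interval_hypergraph_matching:
  assumes "d_interval_hypergraph d k H" "balanced k H"
  shows "\<exists>M. matching_in H M \<and> real k \<le> 2 * real d * (\<Sum>m\<in>M. real (card m))"
proof -
  have fin: "finite H" and edges: "\<forall>h\<in>H. discrete_d_interval d k h"
    using assms(1) unfolding d_interval_hypergraph_def by auto
  have sub: "\<forall>h\<in>H. h \<subseteq> {1..k}" using edges discrete_d_interval_subset by blast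
  obtain f :: "nat set \<Rightarrow> real" where f: "\<forall>h\<in>H. 0 \<le> f h"
      "\<forall>v\<in>{1..k}. (\<Sum>h\<in>{h\<in>H. v \<in> h}. f h) = 1"
    using assms(2) unfolding balanced_def by blast
  define E where "E = H - {{}}"
  have "fractional_matching E f"
    using balanced_fractional_matching[OF sub f] _ fin
    by (rule fractional_matching_subset) (auto simp: E_def)
  moreover have "g \<noteq> {} \<and> finite g \<and> card (right_ends g) \<le> d" if "g \<in> E" for g
  proof -
    have "g \<in> H" "g \<noteq> {}" using that unfolding E_def by auto
    then show ?thesis
      using edges sub card_right_ends_discrete_d_interval by (auto intro: finite_subset)
  qed
  ultimately obtain M where M: "M \<subseteq> E" "pairwise disjnt M"
      and "(\<Sum>h\<in>E. f h * real (card h)) \<le> 2 * real d * (\<Sum>m\<in>M. real (card m))"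
    using local_ratio_matching[of E f d "\<lambda>h. real (card h)"] fin unfolding E_def by blast
  moreover have "(\<Sum>h\<in>E. f h * real (card h)) = (\<Sum>h\<in>H. f h * real (card h))"
    unfolding E_def using fin by (intro sum.mono_neutral_left) auto
  moreover have "\<dots> = real k" using fin sub f(2) by (rule balanced_total_weight)
  moreover have "matching_in H M" using M unfolding matching_in_def E_def by auto
  ultimately show ?thesis by auto
qed

theorem corollary5p2:
  fixes d k :: nat and H :: "nat set set"
  assumes "d \<ge> 1" and "k \<ge> 1"
    and "d_interval_hypergraph d k H"
    and "balanced k H"
  shows "\<exists>M. matching_in H M \<and> (\<Sum>m\<in>M. real (card m)) \<ge> real k / (2 * real d)"
proof -
  obtain M where "matching_in H M" and bound: "real k \<le> 2 * real d * (\<Sum>m\<in>M. real (card m))"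
    using balanced_d_interval_hypergraph_matching[OF assms(3,4)] by blast
  moreover have "real k / (2 * real d) \<le> (\<Sum>m\<in>M. real (card m))"
    using bound assms(1) by (simp add: divide_le_eq mult.commute)
  ultimately show ?thesis by blast
qed

end
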